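(* For every integer $t \ge 4$, there exists a doubly saturated $R(4,t)$-good graph on $6t-11$ vertices.
   Context: All graphs are finite and simple. For integers $s,t$, a graph $G$ is \emph{$R(s,t)$-good} if $G$ contains no clique of size $s$ and no independent set of size $t$. A graph $G$ is \emph{doubly saturated $R(s,t)$-good} if (i) $G$ is $R(s,t)$-good; (ii) for every pair of non-adjacent distinct vertices $u,v$, the graph $G + uv$ is not $R(s,t)$-good; (iii) for every edge $uv$ of $G$, the graph $G - uv$ is not $R(s,t)$-good; and (iv) $G$ is neither a complete graph nor an edgeless graph (equivalently, neither $G$ nor its complement $\overline{G}$ is complete). *)

theory Defs
  imports Main
begin

definition simple_graph :: "'a set \<Rightarrow> ('a \<Rightarrow> 'a \<Rightarrow> bool) \<Rightarrow> bool" where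
  "simple_graph V E \<longleftrightarrow> finite V \<and> (\<forall>u\<in>V. \<forall>v\<in>V. E u v \<longrightarrow> E v u) \<and> (\<forall>v\<in>V. \<not> E v v)"

definition is_clique :: "'a set \<Rightarrow> ('a \<Rightarrow> 'a \<Rightarrow> bool) \<Rightarrow> 'a set \<Rightarrow> bool" where
  "is_clique V E K \<longleftrightarrow> K \<subseteq> V \<and> (\<forall>u\<in>K. \<forall>v\<in>K. u \<noteq> v \<longrightarrow> E u v)"

definition is_indep :: "'a set \<Rightarrow> ('a \<Rightarrow> 'a \<Rightarrow> bool) \<Rightarrow> 'a set \<Rightarrow> bool" where
  "is_indep V E I \<longleftrightarrow> I \<subseteq> V \<and> (\<forall>u\<in>I. \<forall>v\<in>I. u \<noteq> v \<longrightarrow> \<not> E u v)"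

definition R_good :: "nat \<Rightarrow> nat \<Rightarrow> 'a set \<Rightarrow> ('a \<Rightarrow> 'a \<Rightarrow> bool) \<Rightarrow> bool" where
  "R_good s t V E \<longleftrightarrow>
     \<not> (\<exists>K. is_clique V E K \<and> card K = s) \<and> \<not> (\<exists>I. is_indep V E I \<and> card I = t)"

definition add_edge :: "('a \<Rightarrow> 'a \<Rightarrow> bool) \<Rightarrow> 'a \<Rightarrow> 'a \<Rightarrow> ('a \<Rightarrow> 'a \<Rightarrow> bool)" where
  "add_edge E u v = (\<lambda>x y. E x y \<or> (x = u \<and> y = v) \<or> (x = v \<and> y = u))"

definition del_edge :: "('a \<Rightarrow> 'a \<Rightarrow> bool) \<Rightarrow> 'a \<Rightarrow> 'a \<Rightarrow> ('a \<Rightarrow> 'a \<Rightarrow> bool)" where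
  "del_edge E u v = (\<lambda>x y. E x y \<and> \<not> (x = u \<and> y = v) \<and> \<not> (x = v \<and> y = u))"

definition complete_graph :: "'a set \<Rightarrow> ('a \<Rightarrow> 'a \<Rightarrow> bool) \<Rightarrow> bool" where
  "complete_graph V E \<longleftrightarrow> (\<forall>u\<in>V. \<forall>v\<in>V. u \<noteq> v \<longrightarrow> E u v)"

definition edgeless_graph :: "'a set \<Rightarrow> ('a \<Rightarrow> 'a \<Rightarrow> bool) \<Rightarrow> bool" where
  "edgeless_graph V E \<longleftrightarrow> (\<forall>u\<in>V. \<forall>v\<in>V. \<not> E u v)"

definition doubly_saturated_R_good :: "nat \<Rightarrow> nat \<Rightarrow> 'a set \<Rightarrow> ('a \<Rightarrow> 'a \<Rightarrow> bool) \<Rightarrow> bool" where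
  "doubly_saturated_R_good s t V E \<longleftrightarrow>
     R_good s t V E
   \<and> (\<forall>u\<in>V. \<forall>v\<in>V. u \<noteq> v \<and> \<not> E u v \<longrightarrow> \<not> R_good s t V (add_edge E u v))
   \<and> (\<forall>u\<in>V. \<forall>v\<in>V. E u v \<longrightarrow> \<not> R_good s t V (del_edge E u v))
   \<and> \<not> complete_graph V E \<and> \<not> edgeless_graph V E"

end

theory Submission
  imports Defs
begin

(* With m = t - 2, the graph is the circulant graph on Z_(6m+1) with connection set
   {+-m} \<union> +-[2m+1, 3m].  Translating a 4-clique so that it contains 0, its other three
   vertices would be elements of the connection set with all pairwise differences in it, and
   there are no such triples.  An independent set has no two vertices at cyclic distance in
   (2m, 4m]; this traps it in an arc of 2m+1 consecutive vertices, where the forbidden distance m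
   leaves room for at most m+1 of them.  By vertex transitivity, saturation only has to be
   checked for pairs {0, d} with 1 \<le> d \<le> 3m: adding a non-edge completes an explicit K4, and
   deleting an edge completes an explicit independent set of size m+2. *)

lemma add_edge_commute: "add_edge E u v = add_edge E v u"
  unfolding add_edge_def by (auto simp: fun_eq_iff)

lemma del_edge_commute: "del_edge E u v = del_edge E v u"
  unfolding del_edge_def by (auto simp: fun_eq_iff)

lemma not_R_good_add_edge_completing_clique:
  assumes "K \<subseteq> V" "card K = s" "u \<in> K" "v \<in> K"
    and "\<And>x y. x \<in> K \<Longrightarrow> y \<in> K \<Longrightarrow> x \<noteq> y \<Longrightarrow> {x, y} \<noteq> {u, v} \<Longrightarrow> E x y"
  shows "\<not> R_good s t V (add_edge E u v)"
proof -
  have "is_clique V (add_edge E u v) K"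
    using assms unfolding is_clique_def add_edge_def by (metis doubleton_eq_iff)
  then show ?thesis using assms(2) unfolding R_good_def by blast
qed

lemma not_R_good_del_edge_completing_indep:
  assumes "I \<subseteq> V" "card I = t" "u \<in> I" "v \<in> I"
    and "\<And>x y. x \<in> I \<Longrightarrow> y \<in> I \<Longrightarrow> x \<noteq> y \<Longrightarrow> {x, y} \<noteq> {u, v} \<Longrightarrow> \<not> E x y"
  shows "\<not> R_good s t V (del_edge E u v)"
proof -
  have "is_indep V (del_edge E u v) I"
    using assms unfolding is_indep_def del_edge_def by (metis doubleton_eq_iff)
  then show ?thesis using assms(2) unfolding R_good_def by blast
qed

lemma card_le_if_no_two_at_distance:
  fixes d :: int
  assumes "0 < d" "R \<subseteq> {0..2 * d}" "\<And>a b. a \<in> R \<Longrightarrow> b \<in> R \<Longrightarrow> \<bar>a - b\<bar> \<noteq> d"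
  shows "card R \<le> nat d + 1"
proof -
  \<comment> \<open>two points of \<open>{0..2d}\<close> are identified exactly when they are at distance \<open>d\<close>\<close>
  define fold :: "int \<Rightarrow> int" where
    "fold r = (if r < d then r else if r = 2 * d then d else r - d)" for r
  have "inj_on fold R"
  proof (rule inj_onI)
    fix a b assume "a \<in> R" "b \<in> R" "fold a = fold b"
    then have "a = b \<or> \<bar>a - b\<bar> = d"
      using assms(2) unfolding fold_def by (auto split: if_splits)
    then show "a = b" using assms(3) \<open>a \<in> R\<close> \<open>b \<in> R\<close> by blast
  qed
  moreover have "fold ` R \<subseteq> {0..d}"
    using assms(2) unfolding fold_def by auto
  ultimately have "card R \<le> card {0..d}"
    by (metis card_inj_on_le finite_atLeastAtMost_int)
  then show ?thesis by simp
qed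

lemma abs_diff_less_if_in_window:
  fixes j k lo w :: int
  assumes "j \<in> {lo..<lo + w}" "k \<in> {lo..<lo + w}"
  shows "\<bar>k - j\<bar> < w"
  using assms by auto

locale circulant_graph =
  fixes n :: nat and C :: "int set"
  assumes n_pos: "0 < n"
    and zero_notin_conn: "0 \<notin> C"
    and conn_neg_iff: "\<And>d. 0 < d \<Longrightarrow> d < int n \<Longrightarrow> int n - d \<in> C \<longleftrightarrow> d \<in> C"
begin

definition offset :: "nat \<Rightarrow> nat \<Rightarrow> int" where
  "offset u v = (int v - int u) mod int n"

definition adj :: "nat \<Rightarrow> nat \<Rightarrow> bool" where
  "adj u v \<longleftrightarrow> offset u v \<in> C"

definition shift :: "nat \<Rightarrow> int \<Rightarrow> nat" where
  "shift u j = nat ((int u + j) mod int n)"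

lemma offset_nonneg: "0 \<le> offset u v"
  and offset_less: "offset u v < int n"
  using n_pos by (simp_all add: offset_def)

lemma offset_self: "offset u u = 0"
  by (simp add: offset_def)

lemma int_shift: "int (shift u j) = (int u + j) mod int n"
  using n_pos by (simp add: shift_def)

lemma shift_less: "shift u j < n"
proof -
  have "int (shift u j) < int n"
    unfolding int_shift using n_pos by simp
  then show ?thesis by simp
qed

lemma shift_offset: "v < n \<Longrightarrow> shift u (offset u v) = v"
  by (simp add: shift_def offset_def mod_add_right_eq)

lemma shift_zero: "u < n \<Longrightarrow> shift u 0 = u"
  by (simp add: shift_def)

lemma offset_shift_shift: "offset (shift u j) (shift u k) = (k - j) mod int n"
  by (simp add: offset_def int_shift mod_diff_eq)

lemma offset_add: "offset a c = (offset a b + offset b c) mod int n"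
  unfolding offset_def by (simp add: mod_add_eq)

lemma offset_eq_0_iff:
  assumes "u < n" "v < n"
  shows "offset u v = 0 \<longleftrightarrow> u = v"
proof
  assume "offset u v = 0"
  then show "u = v" using shift_offset[OF assms(2), of u] shift_zero[OF assms(1)] by simp
qed (simp add: offset_def)

lemma offset_swap:
  assumes "u < n" "v < n" "u \<noteq> v"
  shows "offset v u = int n - offset u v"
proof -
  have "offset u v \<noteq> 0"
    using assms by (simp add: offset_eq_0_iff)
  have "offset v u = (- (int v - int u)) mod int n"
    by (simp add: offset_def)
  also have "\<dots> = int n - offset u v"
    using \<open>offset u v \<noteq> 0\<close> by (subst zmod_zminus1_eq_if) (simp add: offset_def)
  finally show ?thesis .
qed

lemma mod_in_conn_iff_abs:
  assumes "- int n < x" "x < int n"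
  shows "x mod int n \<in> C \<longleftrightarrow> \<bar>x\<bar> \<in> C"
proof (cases "x < 0")
  case True
  have "x mod int n = (x + int n) mod int n" by simp
  also have "\<dots> = int n - \<bar>x\<bar>"
    using assms True by (subst mod_pos_pos_trivial) auto
  finally show ?thesis
    using conn_neg_iff[of "\<bar>x\<bar>"] assms True by simp
qed (use assms in simp)

lemma adj_shift_iff:
  assumes "\<bar>k - j\<bar> < int n"
  shows "adj (shift u j) (shift u k) \<longleftrightarrow> \<bar>k - j\<bar> \<in> C"
  using mod_in_conn_iff_abs[of "k - j"] assms by (simp add: adj_def offset_shift_shift)

lemma adj_iff_offsets:
  assumes "a < n" "b < n" "c < n"
  shows "adj b c \<longleftrightarrow> \<bar>offset a c - offset a b\<bar> \<in> C"
proof -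
  have "\<bar>offset a c - offset a b\<bar> < int n"
    using offset_nonneg[of a b] offset_less[of a b] offset_nonneg[of a c] offset_less[of a c]
    by (simp add: abs_less_iff)
  then show ?thesis
    using adj_shift_iff[where j = "offset a b" and k = "offset a c" and u = a] shift_offset assms
    by simp
qed

lemma adj_sym: "u < n \<Longrightarrow> v < n \<Longrightarrow> adj u v \<longleftrightarrow> adj v u"
  using adj_iff_offsets[of u u v] adj_iff_offsets[of u v u] by (simp add: offset_self)

lemma adj_irrefl: "\<not> adj u u"
  by (simp add: adj_def offset_self zero_notin_conn)

lemma simple_graph_adj: "simple_graph {0..<n} adj"
  unfolding simple_graph_def using adj_sym adj_irrefl by auto

lemma inj_on_shift:
  assumes "S \<subseteq> {lo..<lo + int n}"
  shows "inj_on (shift u) S"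
proof (rule inj_onI)
  fix j k assume "j \<in> S" "k \<in> S" "shift u j = shift u k"
  then have "int n dvd k - j"
    using offset_shift_shift[of u j k] by (simp add: offset_self mod_eq_0_iff_dvd)
  moreover have "\<bar>k - j\<bar> < int n"
    using assms \<open>j \<in> S\<close> \<open>k \<in> S\<close> by (blast intro: abs_diff_less_if_in_window)
  ultimately show "j = k"
    using dvd_imp_le_int[of "k - j" "int n"] by (cases "k = j") auto
qed

lemma shift_image_pairE:
  assumes "u < n" "S \<subseteq> {lo..<lo + int n}"
    and "x \<in> shift u ` S" "y \<in> shift u ` S" "x \<noteq> y" "{x, y} \<noteq> {u, shift u d}"
  obtains j k where "j \<in> S" "k \<in> S" "j \<noteq> k" "{j, k} \<noteq> {0, d}"
    "adj x y \<longleftrightarrow> \<bar>k - j\<bar> \<in> C"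
proof -
  obtain j k where jk: "j \<in> S" "k \<in> S" "x = shift u j" "y = shift u k"
    using assms(3,4) by auto
  have "\<bar>k - j\<bar> < int n"
    using assms(2) jk(1,2) by (blast intro: abs_diff_less_if_in_window)
  then have "adj x y \<longleftrightarrow> \<bar>k - j\<bar> \<in> C"
    using jk adj_shift_iff by simp
  moreover have "j \<noteq> k" "{j, k} \<noteq> {0, d}"
    using jk assms(5,6) shift_zero[OF assms(1)] by (auto simp: doubleton_eq_iff)
  ultimately show thesis
    using that jk(1,2) by blast
qed

lemma not_R_good_add_edge_shift:
  assumes "u < n" "S \<subseteq> {lo..<lo + int n}" "card S = s" "0 \<in> S" "d \<in> S"
    and "\<And>j k. j \<in> S \<Longrightarrow> k \<in> S \<Longrightarrow> j \<noteq> k \<Longrightarrow> {j, k} \<noteq> {0, d} \<Longrightarrow> \<bar>k - j\<bar> \<in> C"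
  shows "\<not> R_good s t {0..<n} (add_edge adj u (shift u d))"
proof (rule not_R_good_add_edge_completing_clique)
  show "shift u ` S \<subseteq> {0..<n}" using shift_less by auto
  show "card (shift u ` S) = s" using card_image[OF inj_on_shift[OF assms(2)]] assms(3) by simp
  show "u \<in> shift u ` S" "shift u d \<in> shift u ` S"
    using shift_zero[OF assms(1)] assms(4,5) by (metis image_eqI)+
  show "adj x y" if "x \<in> shift u ` S" "y \<in> shift u ` S" "x \<noteq> y" "{x, y} \<noteq> {u, shift u d}" for x y
    using shift_image_pairE[OF assms(1,2) that] assms(6) by metis
qed

lemma not_R_good_del_edge_shift:
  assumes "u < n" "S \<subseteq> {lo..<lo + int n}" "card S = t" "0 \<in> S" "d \<in> S"
    and "\<And>j k. j \<in> S \<Longrightarrow> k \<in> S \<Longrightarrow> j \<noteq> k \<Longrightarrow> {j, k} \<noteq> {0, d} \<Longrightarrow> \<bar>k - j\<bar> \<notin> C"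
  shows "\<not> R_good s t {0..<n} (del_edge adj u (shift u d))"
proof (rule not_R_good_del_edge_completing_indep)
  show "shift u ` S \<subseteq> {0..<n}" using shift_less by auto
  show "card (shift u ` S) = t" using card_image[OF inj_on_shift[OF assms(2)]] assms(3) by simp
  show "u \<in> shift u ` S" "shift u d \<in> shift u ` S"
    using shift_zero[OF assms(1)] assms(4,5) by (metis image_eqI)+
  show "\<not> adj x y" if "x \<in> shift u ` S" "y \<in> shift u ` S" "x \<noteq> y" "{x, y} \<noteq> {u, shift u d}" for x y
    using shift_image_pairE[OF assms(1,2) that] assms(6) by metis
qed

lemma short_offset_orientation:
  assumes "u < n" "v < n" "u \<noteq> v"
  obtains a b where "(a, b) = (u, v) \<or> (a, b) = (v, u)" "1 \<le> offset a b" "offset a b \<le> int n div 2"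
proof -
  have "offset u v \<noteq> 0" "offset v u = int n - offset u v"
    using offset_eq_0_iff[OF assms(1,2)] offset_swap[OF assms] assms(3) by auto
  then have "(1 \<le> offset u v \<and> offset u v \<le> int n div 2) \<or> (1 \<le> offset v u \<and> offset v u \<le> int n div 2)"
    using offset_nonneg[of u v] offset_less[of u v] by presburger
  then show thesis
    using that by blast
qed

end

(* The connection set {+-m} \<union> +-[2m+1, 3m] of Z_(6m+1), by representatives in [0, 6m]. *)
definition ramsey_conn :: "nat \<Rightarrow> int set" where
  "ramsey_conn m = {int m, 5 * int m + 1} \<union> {2 * int m + 1 .. 4 * int m}"

lemma mem_ramsey_conn:
  "x \<in> ramsey_conn m \<longleftrightarrow> x = int m \<or> x = 5 * int m + 1 \<or> (2 * int m + 1 \<le> x \<and> x \<le> 4 * int m)"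
  by (auto simp: ramsey_conn_def)

lemma ramsey_conn_no_triangle:
  assumes "0 < m" and "x \<in> ramsey_conn m" "y \<in> ramsey_conn m" "z \<in> ramsey_conn m"
    and "\<bar>y - x\<bar> \<in> ramsey_conn m" "\<bar>z - x\<bar> \<in> ramsey_conn m" "\<bar>z - y\<bar> \<in> ramsey_conn m"
  shows False
proof -
  have "1 \<le> int m" using assms(1) by simp
  then show False using assms(2-) unfolding mem_ramsey_conn by smt
qed

(* The vertex count n is a parameter, not 6m+1, so that the simplifier cannot rewrite it inside
   adj and offset. *)
locale ramsey_circulant = circulant_graph n "ramsey_conn m" for m n +
  assumes two_le_m: "2 \<le> m"
    and n_eq: "n = 6 * m + 1"

lemma ramsey_circulantI: "2 \<le> m \<Longrightarrow> ramsey_circulant m (6 * m + 1)"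
  by unfold_locales (auto simp: mem_ramsey_conn)

context ramsey_circulant
begin

lemma int_n: "int n = 6 * int m + 1"
  using n_eq by simp

lemma card_clique_neq_4:
  assumes "is_clique {0..<n} adj K"
  shows "card K \<noteq> 4"
proof
  assume "card K = 4"
  then obtain a where a: "a \<in> K" by fastforce
  with \<open>card K = 4\<close> have "card (K - {a}) = 3" by simp
  then obtain b c d where bcd: "K - {a} = {b, c, d}" "b \<noteq> c" "c \<noteq> d" "b \<noteq> d"
    by (auto simp: card_3_iff)
  have abcd: "{a, b, c, d} \<subseteq> K"
    using a bcd(1) by blast
  then have V: "{a, b, c, d} \<subseteq> {0..<n}"
    using assms unfolding is_clique_def by blast
  have pair: "\<bar>offset a q - offset a p\<bar> \<in> ramsey_conn m"
    if "p \<in> {a, b, c, d}" "q \<in> {a, b, c, d}" "p \<noteq> q" for p q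
  proof -
    have "adj p q"
      using assms that abcd unfolding is_clique_def by blast
    moreover have "a < n" "p < n" "q < n"
      using that V by auto
    ultimately show ?thesis
      using adj_iff_offsets[of a p q] by simp
  qed
  have "offset a q \<in> ramsey_conn m" if "q \<in> {b, c, d}" for q
    using pair[of a q] that bcd(1) by (auto simp: offset_self offset_nonneg)
  then show False
    using ramsey_conn_no_triangle[of m "offset a b" "offset a c" "offset a d"] pair bcd two_le_m
    by simp
qed

lemma nonadj_offset_gap:
  assumes "p < n" "q < n" "p \<noteq> q" "\<not> adj p q"
  shows "offset p q \<le> 2 * int m \<or> 4 * int m + 1 \<le> offset p q"
  using assms(4) offset_eq_0_iff[OF assms(1,2)] assms(3) offset_nonneg[of p q]
  unfolding adj_def mem_ramsey_conn by linarith

lemma indep_within_arc: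
  assumes I: "is_indep {0..<n} adj I" and "c0 \<in> I"
  shows "\<exists>c\<in>I. \<forall>q\<in>I. offset c q \<le> 2 * int m"
proof -
  have V: "q < n" if "q \<in> I" for q
    using I that unfolding is_indep_def by auto
  have gap: "offset p q \<le> 2 * int m \<or> 4 * int m + 1 \<le> offset p q" if "p \<in> I" "q \<in> I" "p \<noteq> q" for p q
    using I that V nonadj_offset_gap unfolding is_indep_def by blast
  define S where "S = {q \<in> I. offset q c0 \<le> 2 * int m}"
  have "S \<subseteq> {0..<n}" "c0 \<in> S"
    using I \<open>c0 \<in> I\<close> unfolding S_def is_indep_def by (auto simp: offset_self)
  then have "finite ((\<lambda>q. offset q c0) ` S)" "S \<noteq> {}"
    using finite_subset by auto
  then have "Max ((\<lambda>q. offset q c0) ` S) \<in> (\<lambda>q. offset q c0) ` S"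
    by (intro Max_in) auto
  then obtain c where "c \<in> S" and c_max: "offset c c0 = Max ((\<lambda>q. offset q c0) ` S)"
    by auto
  show ?thesis
  proof (intro bexI ballI)
    show "c \<in> I" using \<open>c \<in> S\<close> unfolding S_def by simp
    fix q assume "q \<in> I"
    show "offset c q \<le> 2 * int m"
    proof (rule ccontr)
      assume far: "\<not> ?thesis"
      then have "q \<noteq> c" by (auto simp: offset_self)
      then have "4 * int m + 1 \<le> offset c q"
        using gap[OF \<open>c \<in> I\<close> \<open>q \<in> I\<close>] far by auto
      moreover have "offset q c = int n - offset c q"
        using offset_swap[OF V[OF \<open>c \<in> I\<close>] V[OF \<open>q \<in> I\<close>]] \<open>q \<noteq> c\<close> by simp
      moreover have "offset c c0 \<le> 2 * int m" "0 \<le> offset c c0" "offset c q < int n"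
        using \<open>c \<in> S\<close> offset_nonneg offset_less unfolding S_def by auto
      ultimately have "1 \<le> offset q c" "offset q c + offset c c0 < int n"
        using int_n by linarith+
      then have sum: "offset q c0 = offset q c + offset c c0"
        using offset_add[of q c0 c] \<open>0 \<le> offset c c0\<close> by (simp add: mod_pos_pos_trivial)
      then have "q \<noteq> c0"
        using \<open>1 \<le> offset q c\<close> \<open>0 \<le> offset c c0\<close> by (auto simp: offset_self)
      then have "offset q c0 \<le> 2 * int m"
        using gap[OF \<open>q \<in> I\<close> \<open>c0 \<in> I\<close>] sum \<open>offset c c0 \<le> 2 * int m\<close>
          \<open>offset q c = int n - offset c q\<close> \<open>4 * int m + 1 \<le> offset c q\<close> int_n by linarith
      then have "offset q c0 \<le> offset c c0"
        unfolding c_max using \<open>finite ((\<lambda>q. offset q c0) ` S)\<close> \<open>q \<in> I\<close> S_def by auto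
      then show False
        using sum \<open>1 \<le> offset q c\<close> by simp
    qed
  qed
qed

lemma card_indep_le:
  assumes I: "is_indep {0..<n} adj I"
  shows "card I \<le> m + 1"
proof (cases "I = {}")
  case False
  then obtain c0 where "c0 \<in> I"
    by blast
  then obtain c where c: "c \<in> I" "\<forall>q\<in>I. offset c q \<le> 2 * int m"
    using indep_within_arc[OF I] by blast
  have V: "q < n" if "q \<in> I" for q
    using I that unfolding is_indep_def by auto
  have "inj_on (offset c) I"
  proof (rule inj_onI)
    fix p q assume "p \<in> I" "q \<in> I" "offset c p = offset c q"
    then show "p = q"
      by (metis V shift_offset)
  qed
  moreover have "card (offset c ` I) \<le> nat (int m) + 1"
  proof (rule card_le_if_no_two_at_distance)
    show "0 < int m" using two_le_m by simp
    show "offset c ` I \<subseteq> {0..2 * int m}" using c(2) offset_nonneg[of c] by auto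
    fix a b assume "a \<in> offset c ` I" "b \<in> offset c ` I"
    then obtain p q where pq: "p \<in> I" "q \<in> I" "a = offset c p" "b = offset c q" by blast
    show "\<bar>a - b\<bar> \<noteq> int m"
    proof (cases "p = q")
      case False
      then have "\<not> adj q p"
        using I pq(1,2) unfolding is_indep_def by auto
      moreover have "adj q p \<longleftrightarrow> \<bar>a - b\<bar> \<in> ramsey_conn m"
        using adj_iff_offsets[OF V[OF c(1)] V[OF pq(2)] V[OF pq(1)]] pq(3,4) by simp
      ultimately show ?thesis
        unfolding mem_ramsey_conn by auto
    next
      case True
      then show ?thesis
        using pq(3,4) two_le_m by simp
    qed
  qed
  ultimately show ?thesis by (simp add: card_image)
qed simp

lemma R_good_adj: "R_good 4 (m + 2) {0..<n} adj"
  unfolding R_good_def using card_clique_neq_4 card_indep_le by fastforce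

lemma add_edge_shift_not_R_good:
  assumes "u < n" "1 \<le> d" "d \<le> 2 * int m" "d \<noteq> int m"
  shows "\<not> R_good 4 t {0..<n} (add_edge adj u (shift u d))"
proof (cases "d < int m")
  case True
  let ?S = "{0, d, d + 2 * int m + 1, d + 3 * int m + 1}"
  show ?thesis
  proof (rule not_R_good_add_edge_shift[OF assms(1), of ?S 0])
    show "\<bar>k - j\<bar> \<in> ramsey_conn m" if "j \<in> ?S" "k \<in> ?S" "j \<noteq> k" "{j, k} \<noteq> {0, d}" for j k
      using that True assms unfolding mem_ramsey_conn by auto
  qed (use True assms int_n in auto)
next
  case False
  let ?S = "{0, d, - int m, d + int m}"
  show ?thesis
  proof (rule not_R_good_add_edge_shift[OF assms(1), of ?S "- int m"])
    show "\<bar>k - j\<bar> \<in> ramsey_conn m" if "j \<in> ?S" "k \<in> ?S" "j \<noteq> k" "{j, k} \<noteq> {0, d}" for j k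
      using that False assms unfolding mem_ramsey_conn by auto
  qed (use False assms int_n two_le_m in auto)
qed

lemma del_edge_shift_not_R_good:
  assumes "u < n" "d \<in> ramsey_conn m" "d \<le> 3 * int m"
  shows "\<not> R_good s (m + 2) {0..<n} (del_edge adj u (shift u d))"
proof -
  have m: "2 \<le> int m" using two_le_m by simp
  consider "d = int m" | "d = 3 * int m" | "2 * int m < d" "d < 3 * int m"
    using assms(2,3) unfolding mem_ramsey_conn by linarith
  then show ?thesis
  proof cases
    case 1
    let ?S = "{-1, 0} \<union> {int m..2 * int m - 1}"
    show ?thesis
    proof (rule not_R_good_del_edge_shift[OF assms(1), of ?S "-1"])
      show "card ?S = m + 2"
        using m by (subst card_Un_disjoint) auto
      show "\<bar>k - j\<bar> \<notin> ramsey_conn m" if "j \<in> ?S" "k \<in> ?S" "j \<noteq> k" "{j, k} \<noteq> {0, d}" for j k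
        using that 1 m unfolding mem_ramsey_conn by auto
    qed (use 1 m int_n in auto)
  next
    case 2
    let ?S = "{0, 3 * int m} \<union> {-2 * int m..- int m - 1}"
    show ?thesis
    proof (rule not_R_good_del_edge_shift[OF assms(1), of ?S "-2 * int m"])
      show "card ?S = m + 2"
        using m by (subst card_Un_disjoint) auto
      show "\<bar>k - j\<bar> \<notin> ramsey_conn m" if "j \<in> ?S" "k \<in> ?S" "j \<noteq> k" "{j, k} \<noteq> {0, d}" for j k
        using that 2 m unfolding mem_ramsey_conn by auto
    qed (use 2 m int_n in auto)
  next
    case 3
    define e where "e = d - 2 * int m"
    let ?S = "{0, 2 * int m, d} \<union> ({e..int m + e - 1} - {int m})"
    show ?thesis
    proof (rule not_R_good_del_edge_shift[OF assms(1), of ?S 0])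
      show "card ?S = m + 2"
        using m 3 unfolding e_def by (subst card_Un_disjoint) (auto simp: card_Diff_singleton)
      show "\<bar>k - j\<bar> \<notin> ramsey_conn m" if "j \<in> ?S" "k \<in> ?S" "j \<noteq> k" "{j, k} \<noteq> {0, d}" for j k
        using that 3 m unfolding mem_ramsey_conn e_def by auto
    qed (use 3 m int_n in \<open>auto simp: e_def\<close>)
  qed
qed

lemma add_edge_not_R_good:
  assumes "u < n" "v < n" "u \<noteq> v" "\<not> adj u v"
  shows "\<not> R_good 4 t {0..<n} (add_edge adj u v)"
proof -
  obtain a b where ab: "(a, b) = (u, v) \<or> (a, b) = (v, u)" "1 \<le> offset a b" "offset a b \<le> int n div 2"
    using short_offset_orientation[OF assms(1-3)] by blast
  then have "a < n" "b < n" "\<not> adj a b" "add_edge adj a b = add_edge adj u v"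
    using assms adj_sym add_edge_commute by auto
  moreover have "offset a b \<le> 2 * int m" "offset a b \<noteq> int m"
    using ab(3) \<open>\<not> adj a b\<close> int_n unfolding adj_def mem_ramsey_conn by auto
  ultimately show ?thesis
    using add_edge_shift_not_R_good[of a "offset a b"] ab(2) shift_offset by metis
qed

lemma del_edge_not_R_good:
  assumes "u < n" "v < n" "adj u v"
  shows "\<not> R_good s (m + 2) {0..<n} (del_edge adj u v)"
proof -
  have "u \<noteq> v"
    using assms(3) adj_irrefl by blast
  then obtain a b where ab: "(a, b) = (u, v) \<or> (a, b) = (v, u)" "1 \<le> offset a b" "offset a b \<le> int n div 2"
    using short_offset_orientation[OF assms(1,2)] by blast
  then have "a < n" "b < n" "adj a b" "del_edge adj a b = del_edge adj u v"
    using assms adj_sym del_edge_commute by auto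
  moreover have "offset a b \<in> ramsey_conn m" "offset a b \<le> 3 * int m"
    using ab(3) \<open>adj a b\<close> int_n unfolding adj_def by auto
  ultimately show ?thesis
    using del_edge_shift_not_R_good[of a "offset a b"] shift_offset by metis
qed

lemma doubly_saturated_adj: "doubly_saturated_R_good 4 (m + 2) {0..<n} adj"
  unfolding doubly_saturated_R_good_def complete_graph_def edgeless_graph_def
proof (intro conjI R_good_adj ballI impI)
  show "\<not> R_good 4 (m + 2) {0..<n} (add_edge adj u v)"
    if "u \<in> {0..<n}" "v \<in> {0..<n}" "u \<noteq> v \<and> \<not> adj u v" for u v
    using add_edge_not_R_good that by simp
  show "\<not> R_good 4 (m + 2) {0..<n} (del_edge adj u v)"
    if "u \<in> {0..<n}" "v \<in> {0..<n}" "adj u v" for u v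
    using del_edge_not_R_good that by simp
  have "offset 0 1 = 1" "offset 0 m = int m"
    using int_n two_le_m by (simp_all add: offset_def)
  then have "\<not> adj 0 1" "adj 0 m"
    using two_le_m unfolding adj_def mem_ramsey_conn by auto
  moreover have "0 \<in> {0..<n}" "1 \<in> {0..<n}" "m \<in> {0..<n}"
    using n_eq two_le_m by auto
  ultimately show "\<not> (\<forall>u\<in>{0..<n}. \<forall>v\<in>{0..<n}. u \<noteq> v \<longrightarrow> adj u v)"
    and "\<not> (\<forall>u\<in>{0..<n}. \<forall>v\<in>{0..<n}. \<not> adj u v)"
    by (metis zero_neq_one)+
qed

end

theorem theorem1:
  fixes t :: nat
  assumes "t \<ge> 4"
  shows "\<exists>(V :: nat set) E. simple_graph V E \<and> card V = 6 * t - 11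
           \<and> doubly_saturated_R_good 4 t V E"
proof -
  define m where "m = t - 2"
  interpret ramsey_circulant m "6 * m + 1"
    using assms by (intro ramsey_circulantI) (simp add: m_def)
  have "card {0..<6 * m + 1} = 6 * t - 11" "m + 2 = t"
    using assms by (simp_all add: m_def)
  then show ?thesis
    using simple_graph_adj doubly_saturated_adj by metis
qed

end
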